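(* Let $(X,d)$ be a complete metric space and let $T:X\to X$ be a mapping. Let $f:[0,\infty)\to(0,\infty)$ be a Lebesgue integrable mapping which is summable (i.e. has finite integral on each compact subset of $[0,\infty)$) and such that $\int_0^{\varepsilon} f(t)\,dt>0$ for each $\varepsilon>0$. Let $\psi\in\Psi$, $\varphi\in\Phi_u$ and $F\in\mathcal{C}$. Suppose that there exists $\alpha\in(0,\tfrac12]$ such that for all $x,y\in X$, the inequality $\alpha\, d(x,Tx)\le d(x,y)$ implies $$\psi\Big(\int_0^{d(Tx,Ty)} f(t)\,dt\Big)\le F\Big(\psi\Big(\int_0^{d(x,y)} f(t)\,dt\Big),\ \varphi\Big(\int_0^{d(x,y)} f(t)\,dt\Big)\Big).$$ Then $T$ has a unique fixed point $a\in X$, and for each $x\in X$, $\lim_{n\to\infty}T^n x=a$.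
   Context: A $C$-class function is a continuous function $F:[0,\infty)^2\to\mathbb{R}$ such that for all $s,t\in[0,\infty)$: (1) $F(s,t)\le s$; (2) $F(s,t)=s$ implies $s=0$ or $t=0$. $\mathcal{C}$ denotes the class of all $C$-class functions. $\Phi_u$ denotes the class of functions $\varphi:[0,\infty)\to[0,\infty)$ that are continuous, satisfy $\varphi(t)>0$ for $t>0$, and $\varphi(0)\ge 0$. $\Psi$ denotes the set of functions $\psi:[0,\infty)\to[0,\infty)$ that are continuous and strictly increasing with $\psi(t)=0$ if and only if $t=0$. *)

theory Defs
  imports "HOL-Analysis.Analysis"
begin

definition C_class :: "(real \<Rightarrow> real \<Rightarrow> real) \<Rightarrow> bool" where
  "C_class F \<longleftrightarrow>
     continuous_on ({0..} \<times> {0..}) (\<lambda>(s,t). F s t) \<and>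
     (\<forall>s\<ge>0. \<forall>t\<ge>0. F s t \<le> s) \<and>
     (\<forall>s\<ge>0. \<forall>t\<ge>0. F s t = s \<longrightarrow> s = 0 \<or> t = 0)"

definition Phi_u :: "(real \<Rightarrow> real) \<Rightarrow> bool" where
  "Phi_u \<phi> \<longleftrightarrow>
     continuous_on {0..} \<phi> \<and> (\<forall>t\<ge>0. \<phi> t \<ge> 0) \<and>
     (\<forall>t>0. \<phi> t > 0) \<and> \<phi> 0 \<ge> 0"

definition Psi :: "(real \<Rightarrow> real) \<Rightarrow> bool" where
  "Psi \<psi> \<longleftrightarrow>
     continuous_on {0..} \<psi> \<and> (\<forall>t\<ge>0. \<psi> t \<ge> 0) \<and>
     strict_mono_on {0..} \<psi> \<and> (\<forall>t\<ge>0. \<psi> t = 0 \<longleftrightarrow> t = 0)"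

end

theory Submission
  imports Defs
begin

text \<open>With \<open>I(s) = \<integral>\<^sub>0\<^sup>s f\<close>, the function \<open>G = \<psi> \<circ> I\<close> is continuous and strictly increasing and
  \<open>h = F(\<psi> \<circ> I, \<phi> \<circ> I)\<close> is continuous with \<open>h < G\<close> on \<open>(0, \<infinity>)\<close>, so the hypothesis says
  \<open>G(d(Tx, Ty)) \<le> h(d(x, y))\<close> whenever \<open>\<alpha> d(x, Tx) \<le> d(x, y)\<close>, a Suzuki-type contraction.
  By compactness of \<open>[\<epsilon>, 2\<epsilon>]\<close> such a map contracts uniformly there: \<open>d(Tx, Ty) \<le> d(x, y) - \<delta>\<close>.
  Hence the steps \<open>d(T\<^sup>nx, T\<^sup>n\<^sup>+\<^sup>1x)\<close> decrease to \<open>0\<close> and every orbit is Cauchy. Since \<open>\<alpha> \<le> 1/2\<close>,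
  infinitely many orbit points satisfy the hypothesis together with the limit, which is therefore fixed.\<close>

locale suzuki_contraction =
  fixes T :: "'a::metric_space \<Rightarrow> 'a" and \<alpha> :: real and G h :: "real \<Rightarrow> real"
  assumes alpha_pos: "0 < \<alpha>" and alpha_le_half: "\<alpha> \<le> 1/2"
    and G_cont: "\<And>b. continuous_on {0..b} G" and G_strict_mono: "strict_mono_on {0..} G"
    and h_cont: "\<And>b. continuous_on {0..b} h" and h_less_G: "\<And>s. 0 < s \<Longrightarrow> h s < G s"
    and contraction: "\<And>x y. \<alpha> * dist x (T x) \<le> dist x y \<Longrightarrow> G (dist (T x) (T y)) \<le> h (dist x y)"
begin

lemma dist_T_less:
  assumes "\<alpha> * dist x (T x) \<le> dist x y" and "x \<noteq> y"
  shows "dist (T x) (T y) < dist x y"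
proof (rule ccontr)
  assume "\<not> ?thesis"
  then have "G (dist x y) \<le> G (dist (T x) (T y))"
    using G_strict_mono by (auto intro: strict_mono_on_leD)
  moreover have "G (dist (T x) (T y)) < G (dist x y)"
    using contraction[OF assms(1)] h_less_G[of "dist x y"] assms(2) by simp
  ultimately show False by simp
qed

lemma dist_T_le:
  assumes "\<alpha> * dist x (T x) \<le> dist x y"
  shows "dist (T x) (T y) \<le> dist x y"
  using dist_T_less[OF assms] by (cases "x = y") auto

lemma alpha_dist_T_le: "\<alpha> * dist x (T x) \<le> dist x (T x)"
  using alpha_pos alpha_le_half by (intro mult_left_le_one_le) auto

lemma dist_T_T_le: "dist (T x) (T (T x)) \<le> dist x (T x)"
  using dist_T_le[OF alpha_dist_T_le] .

lemma dist_orbit_step_le: "dist ((T ^^ n) x) (T ((T ^^ n) x)) \<le> dist x (T x)"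
  by (induction n) (auto intro: order_trans[OF dist_T_T_le])

text \<open>Continuity of \<open>G\<close> and \<open>h\<close> enters here, through compactness of \<open>[\<epsilon>, 2\<epsilon>]\<close>.\<close>
lemma uniform_decrease:
  assumes "0 < \<epsilon>"
  obtains \<delta> where "0 < \<delta>"
    and "\<And>x y. \<alpha> * dist x (T x) \<le> dist x y \<Longrightarrow> \<epsilon> \<le> dist x y \<Longrightarrow> dist x y \<le> 2 * \<epsilon> \<Longrightarrow>
           dist (T x) (T y) \<le> dist x y - \<delta>"
proof -
  have cont: "continuous_on {\<epsilon>..2*\<epsilon>} (\<lambda>s. G s - h s)"
    using assms by (intro continuous_on_diff continuous_on_subset[OF G_cont] continuous_on_subset[OF h_cont]) auto
  then obtain s0 where s0: "s0 \<in> {\<epsilon>..2*\<epsilon>}" and s0_min: "\<And>s. s \<in> {\<epsilon>..2*\<epsilon>} \<Longrightarrow> G s0 - h s0 \<le> G s - h s"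
    using continuous_attains_inf[OF compact_Icc _ cont] assms by auto
  define k where "k = G s0 - h s0"
  have "0 < k" using h_less_G[of s0] s0 assms unfolding k_def by auto
  moreover have "uniformly_continuous_on {0..2*\<epsilon>} G"
    by (rule compact_uniformly_continuous[OF G_cont compact_Icc])
  ultimately obtain \<delta> where "0 < \<delta>"
    and \<delta>: "\<And>s s'. s \<in> {0..2*\<epsilon>} \<Longrightarrow> s' \<in> {0..2*\<epsilon>} \<Longrightarrow> dist s' s < \<delta> \<Longrightarrow> dist (G s') (G s) < k"
    unfolding uniformly_continuous_on_def by metis
  show thesis
  proof (rule that[OF \<open>0 < \<delta>\<close>])
    fix x y assume adm: "\<alpha> * dist x (T x) \<le> dist x y" and "\<epsilon> \<le> dist x y" "dist x y \<le> 2 * \<epsilon>"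
    show "dist (T x) (T y) \<le> dist x y - \<delta>"
    proof (rule ccontr)
      assume "\<not> ?thesis"
      then have "dist (dist (T x) (T y)) (dist x y) < \<delta>"
        using dist_T_le[OF adm] by (simp add: dist_real_def)
      then have "dist (G (dist (T x) (T y))) (G (dist x y)) < k"
        using \<delta> dist_T_le[OF adm] \<open>dist x y \<le> 2 * \<epsilon>\<close> by auto
      moreover have "k \<le> G (dist x y) - h (dist x y)"
        using s0_min \<open>\<epsilon> \<le> dist x y\<close> \<open>dist x y \<le> 2 * \<epsilon>\<close> unfolding k_def by auto
      ultimately show False
        using contraction[OF adm] by (simp add: dist_real_def)
    qed
  qed
qed

lemma orbit_step_dist_tendsto_0: "(\<lambda>n. dist ((T ^^ n) x) (T ((T ^^ n) x))) \<longlonglongrightarrow> 0"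
proof -
  define d where "d n = dist ((T ^^ n) x) (T ((T ^^ n) x))" for n
  have "decseq d"
    unfolding d_def using dist_T_T_le by (intro decseq_SucI) simp
  then obtain r where d_lim: "d \<longlonglongrightarrow> r" and r_le: "\<And>n. r \<le> d n"
    using decseq_convergent[of d 0] unfolding d_def by auto
  have "r = 0"
  proof (rule ccontr)
    assume "r \<noteq> 0"
    moreover have "0 \<le> r" using LIMSEQ_le_const[OF d_lim, of 0] unfolding d_def by auto
    ultimately have "0 < r" by simp
    then obtain \<delta> where "0 < \<delta>" and decrease:
      "\<And>x y. \<alpha> * dist x (T x) \<le> dist x y \<Longrightarrow> r \<le> dist x y \<Longrightarrow> dist x y \<le> 2 * r \<Longrightarrow>
         dist (T x) (T y) \<le> dist x y - \<delta>"
      using uniform_decrease by blast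
    obtain N where "d N < r + min \<delta> r"
      using d_lim \<open>0 < \<delta>\<close> \<open>0 < r\<close> unfolding lim_sequentially dist_real_def
      by (metis abs_less_iff add.commute diff_less_eq min_less_iff_conj order_refl)
    then have "d (Suc N) \<le> d N - \<delta>"
      using decrease[OF alpha_dist_T_le] r_le[of N] unfolding d_def by auto
    then show False
      using r_le[of "Suc N"] \<open>d N < r + min \<delta> r\<close> by auto
  qed
  then show ?thesis using d_lim unfolding d_def by simp
qed

text \<open>While the orbit is at distance at least \<open>\<epsilon>\<close> from \<open>z\<close>, applying \<open>T\<close> gains \<open>\<delta>\<close>,
  which outweighs the step \<open>d(z, Tz)\<close>.\<close>
lemma orbit_stays_close:
  assumes decrease: "\<And>x y. \<alpha> * dist x (T x) \<le> dist x y \<Longrightarrow> \<epsilon> \<le> dist x y \<Longrightarrow> dist x y \<le> 2 * \<epsilon> \<Longrightarrow>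
         dist (T x) (T y) \<le> dist x y - \<delta>"
    and small_step: "dist z (T z) < min \<delta> \<epsilon>"
  shows "dist z ((T ^^ k) z) < 2 * \<epsilon>"
proof (induction k)
  case 0
  have "dist z (T z) < \<epsilon>" using small_step by simp
  then have "0 < \<epsilon>" by (meson le_less_trans zero_le_dist)
  then show ?case by simp
next
  case (Suc k)
  let ?D = "dist z ((T ^^ k) z)"
  show ?case
  proof (cases "?D < \<epsilon>")
    case True
    have "dist z ((T ^^ Suc k) z) \<le> ?D + dist ((T ^^ k) z) (T ((T ^^ k) z))"
      using dist_triangle by simp
    then show ?thesis using True dist_orbit_step_le[of k z] small_step by linarith
  next
    case False
    then have "\<alpha> * dist z (T z) \<le> ?D"
      using alpha_dist_T_le[of z] small_step by linarith
    then have "dist (T z) ((T ^^ Suc k) z) \<le> ?D - \<delta>"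
      using decrease False Suc.IH by (simp add: not_less)
    moreover have "dist z ((T ^^ Suc k) z) \<le> dist z (T z) + dist (T z) ((T ^^ Suc k) z)"
      by (rule dist_triangle)
    ultimately show ?thesis using Suc.IH small_step by linarith
  qed
qed

lemma Cauchy_orbit: "Cauchy (\<lambda>n. (T ^^ n) x)"
proof (rule metric_CauchyI)
  fix e :: real assume "0 < e"
  then obtain \<delta> where "0 < \<delta>" and decrease:
    "\<And>x y. \<alpha> * dist x (T x) \<le> dist x y \<Longrightarrow> e/4 \<le> dist x y \<Longrightarrow> dist x y \<le> 2 * (e/4) \<Longrightarrow>
       dist (T x) (T y) \<le> dist x y - \<delta>"
    using uniform_decrease[of "e/4"] by auto
  obtain N where N: "dist ((T ^^ N) x) (T ((T ^^ N) x)) < min \<delta> (e/4)"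
    using orbit_step_dist_tendsto_0[of x] \<open>0 < e\<close> \<open>0 < \<delta>\<close>
    unfolding lim_sequentially by (metis dist_real_def diff_zero abs_of_nonneg zero_le_dist
        min_less_iff_conj divide_pos_pos zero_less_numeral order_refl)
  have close: "dist ((T ^^ N) x) ((T ^^ m) x) < e/2" if "N \<le> m" for m
  proof -
    have "(T ^^ (m - N)) ((T ^^ N) x) = (T ^^ m) x"
      using that by (metis comp_apply funpow_add le_add_diff_inverse2)
    then show ?thesis using orbit_stays_close[OF decrease N, of "m - N"] by simp
  qed
  show "\<exists>M. \<forall>m\<ge>M. \<forall>n\<ge>M. dist ((T ^^ m) x) ((T ^^ n) x) < e"
  proof (intro exI allI impI)
    fix m n assume "N \<le> m" "N \<le> n"
    then show "dist ((T ^^ m) x) ((T ^^ n) x) < e"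
      using dist_triangle3[of "(T ^^ m) x" "(T ^^ n) x" "(T ^^ N) x"] close[of m] close[of n]
      by linarith
  qed
qed

text \<open>The only place where \<open>\<alpha> \<le> 1/2\<close> is needed, via \<open>d(z, Tz) \<le> d(z, a) + d(Tz, a)\<close>.\<close>
lemma admissible_or_next_admissible:
  "\<alpha> * dist z (T z) \<le> dist z a \<or> \<alpha> * dist (T z) (T (T z)) \<le> dist (T z) a"
proof (rule ccontr)
  assume "\<not> ?thesis"
  then have "dist z a + dist (T z) a < \<alpha> * dist z (T z) + \<alpha> * dist (T z) (T (T z))"
    by simp
  also have "\<dots> \<le> 2 * \<alpha> * dist z (T z)"
    using dist_T_T_le[of z] alpha_pos by (simp add: mult_left_mono)
  also have "\<dots> \<le> dist z (T z)"
    using alpha_pos alpha_le_half by (intro mult_left_le_one_le) auto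
  finally show False
    using dist_triangle[of z "T z" a] dist_commute[of a "T z"] by linarith
qed

lemma orbit_limit_fixed_point:
  assumes lim: "(\<lambda>n. (T ^^ n) x) \<longlonglongrightarrow> a"
  shows "T a = a"
proof (rule ccontr)
  assume "T a \<noteq> a"
  then have "0 < dist a (T a) / 2" by simp
  then obtain N where N: "\<And>n. N \<le> n \<Longrightarrow> dist ((T ^^ n) x) a < dist a (T a) / 2"
    using lim unfolding lim_sequentially by blast
  obtain k where "N \<le> k" and step: "dist ((T ^^ Suc k) x) (T a) \<le> dist ((T ^^ k) x) a"
    using admissible_or_next_admissible[of "(T ^^ N) x" a] dist_T_le
    by (metis funpow.simps(2) comp_apply le_refl le_SucI)
  have "dist a (T a) \<le> dist ((T ^^ Suc k) x) a + dist ((T ^^ Suc k) x) (T a)"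
    by (rule dist_triangle3)
  then show False
    using N[of k] N[of "Suc k"] \<open>N \<le> k\<close> step by simp
qed

lemma fixed_point_unique:
  assumes "T a = a" and "T b = b"
  shows "a = b"
proof (rule ccontr)
  assume "a \<noteq> b"
  then have "dist (T a) (T b) < dist a b"
    using assms by (intro dist_T_less) auto
  then show False using assms by simp
qed

end

theorem suzuki_contraction_fixed_point:
  fixes T :: "'a::complete_space \<Rightarrow> 'a"
  assumes "suzuki_contraction T \<alpha> G h"
  shows "\<exists>a. T a = a \<and> (\<forall>b. T b = b \<longrightarrow> b = a) \<and> (\<forall>x. (\<lambda>n. (T ^^ n) x) \<longlonglongrightarrow> a)"
proof -
  interpret suzuki_contraction T \<alpha> G h by fact
  have orbit_converges: "\<exists>a. (\<lambda>n. (T ^^ n) x) \<longlonglongrightarrow> a" for x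
    using Cauchy_orbit[of x] by (simp add: Cauchy_convergent_iff convergent_def)
  then obtain a where "(\<lambda>n. (T ^^ n) undefined) \<longlonglongrightarrow> a" by blast
  then have fixed: "T a = a" by (rule orbit_limit_fixed_point)
  show ?thesis
  proof (intro exI conjI allI impI)
    show "T a = a" by (fact fixed)
    show "b = a" if "T b = b" for b
      using fixed_point_unique[OF that fixed] .
    show "(\<lambda>n. (T ^^ n) x) \<longlonglongrightarrow> a" for x
      using orbit_converges[of x] orbit_limit_fixed_point fixed_point_unique fixed by metis
  qed
qed

lemma set_integral_pos_Icc:
  fixes f :: "real \<Rightarrow> real"
  assumes "set_integrable lborel {a..b} f" and "a < b" and pos: "\<And>t. t \<in> {a..b} \<Longrightarrow> 0 < f t"
  shows "0 < (LINT t:{a..b}|lborel. f t)"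
proof -
  have integrable: "integrable lborel (\<lambda>t. indicator {a..b} t * f t)"
    and nonneg: "AE t in lborel. 0 \<le> indicator {a..b} t * f t"
    using assms(1) pos by (auto simp: set_integrable_def indicator_def less_imp_le)
  have "(LINT t:{a..b}|lborel. f t) \<noteq> 0"
  proof
    assume "(LINT t:{a..b}|lborel. f t) = 0"
    then have "AE t in lborel. indicator {a..b} t * f t = 0"
      using integral_nonneg_eq_0_iff_AE[OF integrable nonneg] by (simp add: set_lebesgue_integral_def)
    then have "AE t in lborel. t \<notin> {a..b}"
      by eventually_elim (use pos in \<open>fastforce simp: indicator_def\<close>)
    then have "{a..b} \<in> null_sets lborel"
      by (subst AE_iff_null_sets) auto
    then show False using \<open>a < b\<close> by (auto simp: null_sets_def)
  qed
  moreover have "0 \<le> (LINT t:{a..b}|lborel. f t)"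
    using integral_nonneg_AE[OF nonneg] by (simp add: set_lebesgue_integral_def)
  ultimately show ?thesis by simp
qed

context
  fixes f :: "real \<Rightarrow> real"
  assumes f_int: "\<And>e. 0 \<le> e \<Longrightarrow> set_integrable lborel {0..e} f"
begin

lemma set_integral_from_0_eq_integral:
  "0 \<le> s \<Longrightarrow> (LINT t:{0..s}|lborel. f t) = integral {0..s} f"
  using set_borel_integral_eq_integral(2)[OF f_int] .

lemma set_integral_from_0_nonneg:
  assumes f_nonneg: "\<And>t. 0 \<le> t \<Longrightarrow> 0 \<le> f t"
  shows "0 \<le> (LINT t:{0..s}|lborel. f t)"
  unfolding set_lebesgue_integral_def
  by (rule integral_nonneg_AE) (auto simp: indicator_def f_nonneg)

lemma continuous_on_set_integral_from_0: "continuous_on {0..b} (\<lambda>s. LINT t:{0..s}|lborel. f t)"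
proof (cases "0 \<le> b")
  case True
  have "continuous_on {0..b} (\<lambda>s. integral {0..s} f)"
    using indefinite_integral_continuous_1 set_borel_integral_eq_integral(1)[OF f_int[OF True]] .
  then show ?thesis
    by (rule continuous_on_cong[THEN iffD1, rotated 2]) (auto simp: set_integral_from_0_eq_integral)
qed simp

lemma strict_mono_on_set_integral_from_0:
  assumes f_pos: "\<And>t. 0 \<le> t \<Longrightarrow> 0 < f t"
  shows "strict_mono_on {0..} (\<lambda>s. LINT t:{0..s}|lborel. f t)"
proof (rule strict_mono_onI)
  fix a b :: real assume "a \<in> {0..}" "a < b"
  then have "0 \<le> a" by simp
  have int_ab: "set_integrable lborel {a..b} f"
    using set_integrable_subset[OF f_int[of b]] \<open>0 \<le> a\<close> \<open>a < b\<close> by auto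
  have "integral {0..b} f = integral {0..a} f + integral {a..b} f"
    using \<open>0 \<le> a\<close> \<open>a < b\<close> set_borel_integral_eq_integral(1)[OF f_int[of b]]
    by (intro Henstock_Kurzweil_Integration.integral_combine[symmetric]) auto
  moreover have "0 < integral {a..b} f"
    using set_integral_pos_Icc[OF int_ab \<open>a < b\<close>] f_pos \<open>0 \<le> a\<close>
      set_borel_integral_eq_integral(2)[OF int_ab] by simp
  ultimately show "(LINT t:{0..a}|lborel. f t) < (LINT t:{0..b}|lborel. f t)"
    using \<open>0 \<le> a\<close> \<open>a < b\<close> by (simp add: set_integral_from_0_eq_integral)
qed

end

lemma C_class_less:
  assumes "C_class F" and "0 < s" and "0 < t"
  shows "F s t < s"
proof -
  have "F s t \<le> s" and "F s t = s \<longrightarrow> s = 0 \<or> t = 0"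
    using assms(1) less_imp_le[OF assms(2)] less_imp_le[OF assms(3)] unfolding C_class_def by auto
  then show ?thesis using assms(2,3) by fastforce
qed

lemma continuous_on_C_class_compose:
  assumes "C_class F" and "continuous_on S g" and "continuous_on S k"
    and "\<And>x. x \<in> S \<Longrightarrow> 0 \<le> g x" and "\<And>x. x \<in> S \<Longrightarrow> 0 \<le> k x"
  shows "continuous_on S (\<lambda>x. F (g x) (k x))"
proof -
  have "continuous_on S (\<lambda>x. (\<lambda>(s, t). F s t) (g x, k x))"
    using assms(1) unfolding C_class_def
    by (elim conjE continuous_on_compose2) (use assms(2-) in \<open>auto intro: continuous_on_Pair\<close>)
  then show ?thesis by simp
qed

lemma suzuki_contraction_altering_distance:
  assumes "Psi \<psi>" and "Phi_u \<phi>" and "C_class F"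
    and I_cont: "\<And>b. continuous_on {0..b} I" and I_mono: "strict_mono_on {0..} I"
    and I_nonneg: "\<And>s. 0 \<le> s \<Longrightarrow> 0 \<le> I s"
    and "0 < \<alpha>" and "\<alpha> \<le> 1/2"
    and contr: "\<And>x y. \<alpha> * dist x (T x) \<le> dist x y \<Longrightarrow>
       \<psi> (I (dist (T x) (T y))) \<le> F (\<psi> (I (dist x y))) (\<phi> (I (dist x y)))"
  shows "suzuki_contraction T \<alpha> (\<lambda>s. \<psi> (I s)) (\<lambda>s. F (\<psi> (I s)) (\<phi> (I s)))"
proof
  have I_pos: "0 < I s" if "0 < s" for s
  proof -
    have "I 0 < I s" using that by (intro strict_mono_onD[OF I_mono]) auto
    then show ?thesis using I_nonneg[of 0] by linarith
  qed
  have \<psi>: "continuous_on {0..} \<psi>" "strict_mono_on {0..} \<psi>" "\<And>t. 0 \<le> t \<Longrightarrow> 0 \<le> \<psi> t"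
      "\<And>t. 0 < t \<Longrightarrow> \<psi> t \<noteq> 0"
    using \<open>Psi \<psi>\<close> unfolding Psi_def by auto
  have \<phi>: "continuous_on {0..} \<phi>" "\<And>t. 0 \<le> t \<Longrightarrow> 0 \<le> \<phi> t" "\<And>t. 0 < t \<Longrightarrow> 0 < \<phi> t"
    using \<open>Phi_u \<phi>\<close> unfolding Phi_u_def by auto
  have \<psi>I_cont: "continuous_on {0..b} (\<lambda>s. \<psi> (I s))" for b
    by (rule continuous_on_compose2[OF \<psi>(1) I_cont]) (auto intro: I_nonneg)
  have \<phi>I_cont: "continuous_on {0..b} (\<lambda>s. \<phi> (I s))" for b
    by (rule continuous_on_compose2[OF \<phi>(1) I_cont]) (auto intro: I_nonneg)
  show "continuous_on {0..b} (\<lambda>s. \<psi> (I s))" for b by (fact \<psi>I_cont)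
  show "continuous_on {0..b} (\<lambda>s. F (\<psi> (I s)) (\<phi> (I s)))" for b
    by (rule continuous_on_C_class_compose[OF \<open>C_class F\<close> \<psi>I_cont \<phi>I_cont])
      (auto intro: I_nonneg \<psi>(3) \<phi>(2))
  show "strict_mono_on {0..} (\<lambda>s. \<psi> (I s))"
  proof (rule strict_mono_onI)
    fix r s :: real assume "r \<in> {0..}" "s \<in> {0..}" "r < s"
    then show "\<psi> (I r) < \<psi> (I s)"
      by (intro strict_mono_onD[OF \<psi>(2)] strict_mono_onD[OF I_mono]) (auto intro: I_nonneg)
  qed
  show "F (\<psi> (I s)) (\<phi> (I s)) < \<psi> (I s)" if "0 < s" for s
    using C_class_less[OF \<open>C_class F\<close>] \<psi>(3,4) \<phi>(3) I_pos[OF that]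
    by (simp add: less_le)
qed (use assms in auto)

theorem theorem3p1:
  fixes T :: "'a::complete_space \<Rightarrow> 'a"
    and f :: "real \<Rightarrow> real"
    and \<psi> \<phi> :: "real \<Rightarrow> real"
    and F :: "real \<Rightarrow> real \<Rightarrow> real"
  assumes f_pos: "\<forall>t\<ge>0. f t > 0"
    and f_int: "\<forall>e\<ge>0. set_integrable lborel {0..e} f"
    and f_int_pos: "\<forall>\<epsilon>>0. (LINT t:{0..\<epsilon>}|lborel. f t) > 0"
    and psi: "Psi \<psi>" and phi: "Phi_u \<phi>" and F: "C_class F"
    and contr: "\<exists>\<alpha>. 0 < \<alpha> \<and> \<alpha> \<le> 1/2 \<and>
       (\<forall>x y. \<alpha> * dist x (T x) \<le> dist x y \<longrightarrow>
          \<psi> (LINT t:{0..dist (T x) (T y)}|lborel. f t)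
            \<le> F (\<psi> (LINT t:{0..dist x y}|lborel. f t)) (\<phi> (LINT t:{0..dist x y}|lborel. f t)))"
  shows "\<exists>a. T a = a \<and> (\<forall>b. T b = b \<longrightarrow> b = a) \<and>
           (\<forall>x. (\<lambda>n. (T ^^ n) x) \<longlonglongrightarrow> a)"
proof -
  obtain \<alpha> where "0 < \<alpha>" "\<alpha> \<le> 1/2" and contr_\<alpha>: "\<forall>x y. \<alpha> * dist x (T x) \<le> dist x y \<longrightarrow>
          \<psi> (LINT t:{0..dist (T x) (T y)}|lborel. f t)
            \<le> F (\<psi> (LINT t:{0..dist x y}|lborel. f t)) (\<phi> (LINT t:{0..dist x y}|lborel. f t))"
    using contr by blast
  have f_int': "\<And>e. 0 \<le> e \<Longrightarrow> set_integrable lborel {0..e} f"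
    and f_nonneg: "\<And>t. 0 \<le> t \<Longrightarrow> 0 \<le> f t"
    using f_int f_pos by (auto intro: less_imp_le)
  have "suzuki_contraction T \<alpha> (\<lambda>s. \<psi> (LINT t:{0..s}|lborel. f t))
          (\<lambda>s. F (\<psi> (LINT t:{0..s}|lborel. f t)) (\<phi> (LINT t:{0..s}|lborel. f t)))"
  proof (rule suzuki_contraction_altering_distance[OF psi phi F])
    show "strict_mono_on {0..} (\<lambda>s. LINT t:{0..s}|lborel. f t)"
      using f_pos by (intro strict_mono_on_set_integral_from_0[OF f_int']) auto
  qed (use continuous_on_set_integral_from_0[OF f_int']
        set_integral_from_0_nonneg[OF f_int' f_nonneg] \<open>0 < \<alpha>\<close> \<open>\<alpha> \<le> 1/2\<close> contr_\<alpha> in auto)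
  then show ?thesis by (rule suzuki_contraction_fixed_point)
qed

end
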